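(* Let $f : 2^N \to \mathbb{R}_{\ge 0}$ be a non-negative submodular function, let $r \ge 1$ be an integer, $\alpha \in [0,1]$ and $v^\star \in \mathbb{R}$. Consider a randomized procedure with $S_0 = \emptyset$ and $S_i = S_{i-1} \cup T_i$ for $i = 1,\dots,r$, where $T_i$ is a random set (returned by the subroutine SIEVE at iteration $i$ of BLITS). Assume that for every $i \in \{1,\dots,r\}$, given the current solution $S_{i-1}$, the returned set satisfies $$\mathbb{E}\left[f_{S_{i-1}}(T_i)\right] \ge \frac{\alpha}{r}\left(\left(1-\frac{1}{r}\right)^{i-1} v^\star - f(S_{i-1})\right).$$ Then $\mathbb{E}[f(S_r)] \ge \frac{\alpha}{e}\, v^\star$.
   Context: For sets $S,T \subseteq N$, $f_S(T) = f(S\cup T) - f(S)$. $f$ is submodular if $f(S\cup\{a\}) - f(S) \ge f(T\cup\{a\}) - f(T)$ whenever $S\subseteq T$ and $a\notin T$. BLITS is the algorithm that starts with $S=\emptyset$ and for $r$ iterations adds to $S$ a block returned by a subroutine called SIEVE. *)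

theory Defs
  imports "HOL-Probability.Probability_Mass_Function"
begin

definition submodular_on :: "'a set \<Rightarrow> ('a set \<Rightarrow> real) \<Rightarrow> bool" where
  "submodular_on N f \<longleftrightarrow>
     (\<forall>S T a. S \<subseteq> T \<and> T \<subseteq> N \<and> a \<in> N \<and> a \<notin> T \<longrightarrow>
        f (insert a S) - f S \<ge> f (insert a T) - f T)"

definition marg :: "('a set \<Rightarrow> real) \<Rightarrow> 'a set \<Rightarrow> 'a set \<Rightarrow> real" where
  "marg f S T = f (S \<union> T) - f S"

text \<open>Distribution of the solution S_i: S_0 = {}, and S_i = S_(i-1) \<union> T_i where,
  given the current solution S, T_i is drawn from the kernel K i S (the SIEVE step).\<close>
fun blits_dist :: "(nat \<Rightarrow> 'a set \<Rightarrow> 'a set pmf) \<Rightarrow> nat \<Rightarrow> 'a set pmf" where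
  "blits_dist K 0 = return_pmf {}"
| "blits_dist K (Suc i) =
     bind_pmf (blits_dist K i) (\<lambda>S. map_pmf (\<lambda>T. S \<union> T) (K (Suc i) S))"

end

theory Submission
  imports Defs
begin

text \<open>Write a i for the expected value of f(S_i), c = \<alpha>/r and q = 1 - 1/r. The hypothesis
  on SIEVE gives the recurrence a (i+1) \<ge> (1 - c) a i + c q^i v, and since q \<le> 1 - c,
  induction yields a i \<ge> i c q^(i-1) v. Hence a r \<ge> \<alpha> (1 - 1/r)^(r-1) v \<ge> \<alpha> v / e
  when v \<ge> 0; for v < 0 the bound is trivial because f is non-negative.\<close>

lemma exp_minus_one_le_power_one_minus_inverse:
  fixes n :: nat
  assumes "n \<ge> 1"
  shows "exp (-1) \<le> (1 - 1 / real n) ^ (n - 1)"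
proof (cases "n = 1")
  case False
  define m where "m = n - 1"
  have m: "m > 0" "real n = real m + 1"
    using assms False by (auto simp: m_def)
  have "1 - 1 / real n = inverse (1 + 1 / real m)"
    using m by (simp add: field_simps)
  then have "(1 - 1 / real n) ^ m = inverse ((1 + 1 / real m) ^ m)"
    by (simp add: power_inverse)
  moreover have "inverse (exp 1) \<le> inverse ((1 + 1 / real m) ^ m)"
    using m exp_ge_one_plus_x_over_n_power_n[of m 1]
    by (intro le_imp_inverse_le) (auto intro!: zero_less_power add_pos_nonneg)
  ultimately show ?thesis
    by (simp add: m_def exp_minus)
qed simp

lemma linear_recurrence_lower_bound:
  fixes a :: "nat \<Rightarrow> real" and c q v :: real
  assumes "0 \<le> a 0" "0 \<le> c" "0 \<le> q" "q \<le> 1 - c" "0 \<le> v"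
    and step: "\<And>j. j < n \<Longrightarrow> (1 - c) * a j + c * q ^ j * v \<le> a (Suc j)"
  shows "j < n \<Longrightarrow> real (Suc j) * c * q ^ j * v \<le> a (Suc j)"
proof (induction j)
  case 0
  have "0 \<le> (1 - c) * a 0"
    using assms by simp
  then show ?case
    using step[OF 0] by simp
next
  case (Suc j)
  have IH: "real (Suc j) * c * q ^ j * v \<le> a (Suc j)"
    using Suc by simp
  have "q * (real (Suc j) * c * q ^ j * v) \<le> q * a (Suc j)"
    using IH assms by (intro mult_left_mono) auto
  also have "\<dots> \<le> (1 - c) * a (Suc j)"
    using IH assms by (intro mult_right_mono order_trans[OF _ IH]) auto
  finally have "real (Suc (Suc j)) * c * q ^ Suc j * v \<le> (1 - c) * a (Suc j) + c * q ^ Suc j * v"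
    by (simp add: algebra_simps)
  then show ?case
    using step[OF Suc.prems] by linarith
qed

lemma set_pmf_blits_dist_subset_Pow:
  assumes "\<And>i S. i < n \<Longrightarrow> S \<in> set_pmf (blits_dist K i) \<Longrightarrow> set_pmf (K (Suc i) S) \<subseteq> Pow N"
  shows "i \<le> n \<Longrightarrow> set_pmf (blits_dist K i) \<subseteq> Pow N"
proof (induction i)
  case (Suc i)
  then show ?case
    using assms[of i] by fastforce
qed simp

lemma expectation_blits_dist_Suc:
  fixes f :: "'a set \<Rightarrow> real"
  assumes "finite (set_pmf (blits_dist K i))"
    and "\<And>S. S \<in> set_pmf (blits_dist K i) \<Longrightarrow> finite (set_pmf (K (Suc i) S))"
  shows "measure_pmf.expectation (blits_dist K (Suc i)) f =
    measure_pmf.expectation (blits_dist K i)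
      (\<lambda>S. measure_pmf.expectation (K (Suc i) S) (\<lambda>T. f (S \<union> T)))"
  using assms
  by (simp add: pmf_expectation_bind[OF assms(1)] integral_measure_pmf[OF assms(1)])

lemma expectation_blits_dist_Suc_ge:
  fixes f :: "'a set \<Rightarrow> real"
  assumes "finite N" "set_pmf (blits_dist K i) \<subseteq> Pow N"
    and supp: "\<And>S. S \<in> set_pmf (blits_dist K i) \<Longrightarrow> set_pmf (K (Suc i) S) \<subseteq> Pow N"
    and gain: "\<And>S. S \<in> set_pmf (blits_dist K i) \<Longrightarrow>
      c * (w - f S) \<le> measure_pmf.expectation (K (Suc i) S) (marg f S)"
  shows "(1 - c) * measure_pmf.expectation (blits_dist K i) f + c * w
    \<le> measure_pmf.expectation (blits_dist K (Suc i)) f"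
proof -
  let ?D = "blits_dist K i"
  let ?g = "\<lambda>S. measure_pmf.expectation (K (Suc i) S) (\<lambda>T. f (S \<union> T))"
  have fin_D: "finite (set_pmf ?D)"
    using assms(1,2) by (meson finite_Pow_iff finite_subset)
  have fin_K: "finite (set_pmf (K (Suc i) S))" if "S \<in> set_pmf ?D" for S
    using assms(1) supp[OF that] by (meson finite_Pow_iff finite_subset)
  have pointwise: "(1 - c) * f S + c * w \<le> ?g S" if "S \<in> set_pmf ?D" for S
  proof -
    have "measure_pmf.expectation (K (Suc i) S) (marg f S) = ?g S - f S"
      using fin_K[OF that]
      by (simp add: marg_def[abs_def] Bochner_Integration.integral_diff integrable_measure_pmf_finite)
    then show ?thesis
      using gain[OF that] by (simp add: algebra_simps)
  qed
  have "(1 - c) * measure_pmf.expectation ?D f + c * w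
      = measure_pmf.expectation ?D (\<lambda>S. (1 - c) * f S + c * w)"
    using fin_D by (simp add: integrable_measure_pmf_finite)
  also have "\<dots> \<le> measure_pmf.expectation ?D ?g"
    by (intro integral_mono_AE AE_pmfI integrable_measure_pmf_finite fin_D pointwise)
  also have "\<dots> = measure_pmf.expectation (blits_dist K (Suc i)) f"
    by (rule expectation_blits_dist_Suc[symmetric, OF fin_D fin_K])
  finally show ?thesis .
qed

theorem lemma2:
  fixes N :: "'a set" and f :: "'a set \<Rightarrow> real"
    and K :: "nat \<Rightarrow> 'a set \<Rightarrow> 'a set pmf"
    and r :: nat and \<alpha> v :: real
  assumes "finite N"
    and "\<forall>S. S \<subseteq> N \<longrightarrow> f S \<ge> 0"
    and "submodular_on N f"
    and "r \<ge> 1"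
    and "0 \<le> \<alpha>" and "\<alpha> \<le> 1"
    and "\<forall>i\<in>{1..r}. \<forall>S\<in>set_pmf (blits_dist K (i - 1)). set_pmf (K i S) \<subseteq> Pow N"
    and "\<forall>i\<in>{1..r}. \<forall>S\<in>set_pmf (blits_dist K (i - 1)).
           measure_pmf.expectation (K i S) (\<lambda>T. marg f S T)
             \<ge> \<alpha> / real r * ((1 - 1 / real r) ^ (i - 1) * v - f S)"
  shows "measure_pmf.expectation (blits_dist K r) f \<ge> \<alpha> / exp 1 * v"
proof -
  let ?D = "blits_dist K"
  let ?a = "\<lambda>i. measure_pmf.expectation (?D i) f"
  define c q where "c = \<alpha> / real r" and "q = 1 - 1 / real r"
  have supp_K: "set_pmf (K (Suc i) S) \<subseteq> Pow N" if "i < r" "S \<in> set_pmf (?D i)" for i S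
    using assms(7) that by auto
  have gain: "c * (q ^ i * v - f S) \<le> measure_pmf.expectation (K (Suc i) S) (marg f S)"
    if "i < r" "S \<in> set_pmf (?D i)" for i S
    using assms(8)[rule_format, of "Suc i" S] that by (simp add: c_def q_def)
  have supp_D: "i \<le> r \<Longrightarrow> set_pmf (?D i) \<subseteq> Pow N" for i
    using set_pmf_blits_dist_subset_Pow[of r K N, OF supp_K] .
  have step: "(1 - c) * ?a i + c * q ^ i * v \<le> ?a (Suc i)" if "i < r" for i
    using expectation_blits_dist_Suc_ge[OF assms(1) supp_D supp_K gain] that
    by (simp add: mult.assoc)
  have a_nonneg: "0 \<le> ?a i" if "i \<le> r" for i
    using supp_D[OF that] assms(2) by (intro integral_nonneg_AE AE_pmfI) blast
  show ?thesis
  proof (cases "0 \<le> v")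
    case True
    have "0 \<le> q" "q \<le> 1 - c"
      using assms(4,6) by (auto simp: c_def q_def field_simps)
    have "\<alpha> / exp 1 * v = \<alpha> * exp (-1) * v"
      by (simp add: exp_minus field_simps)
    also have "\<dots> \<le> \<alpha> * q ^ (r - 1) * v"
      using exp_minus_one_le_power_one_minus_inverse[OF assms(4)] assms(5) True
      by (intro mult_right_mono mult_left_mono) (auto simp: q_def)
    also have "\<dots> = real r * c * q ^ (r - 1) * v"
      using assms(4) by (simp add: c_def)
    also have "\<dots> \<le> ?a r"
      using linear_recurrence_lower_bound[of ?a c q v r "r - 1"]
        \<open>0 \<le> q\<close> \<open>q \<le> 1 - c\<close> a_nonneg[of 0] step assms(4,5) True
      by (simp add: c_def)
    finally show ?thesis .
  next
    case False
    then have "\<alpha> / exp 1 * v \<le> 0"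
      using assms(5) by (simp add: divide_nonpos_pos mult_nonneg_nonpos)
    then show ?thesis
      using a_nonneg[of r] by linarith
  qed
qed

end
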